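(* Let $h\ge r$ be positive integers and let $0<\beta<1$ be a real. There is a positive real $\alpha$ depending on $h,r,\beta$ such that the following holds. Let $G$ be any graph on $n$ vertices and let $p=p_r(G)$. For $i,j\in[h]$ let $\mathcal{A}^*_{i,j}$ denote the set of $i$-good sequences of length $j$ relative to $(\alpha,\beta,h,r)$ in $V(G)$ that have no repeated element. If $p>4jn^{-1/r}$, then for each $i\in[h]$ and $r\le j\le h$, \[\sum_{S\in\mathcal{A}^*_{i,j}}|N(S)|^r\ge\left(\frac{1}{2^{j+1}}-\beta\right)n^{j+r}p^{jr}.\]
   Context: All graphs are finite and simple. For a positive integer $r$, $p_r(G)=t_{K_{1,r}}(G)^{1/r}=\frac1n\left(\frac1n\sum_{v\in V(G)}d(v)^r\right)^{1/r}$ where $n=|G|$. A sequence in a set $W$ is a finite sequence of elements of $W$ (repetitions allowed); its length $|S|$ counts multiplicity; $W^k$ denotes the set of sequences of length $k$ in $W$. For a sequence $S$ in $V(G)$, $N(S)$ is the set of vertices adjacent to every vertex of $S$. Goodness: fix reals $0<\alpha,\beta<1$ and positive integers $h,r$, and let $p=p_r(G)$. A sequence $T$ in $V(G)$ is $0$-good if $|N(T)|\ge\alpha p^{|T|}n$. For $1\le i\le h$, a sequence $S$ in $V(G)$ of length at most $h$ is $i$-good if $S$ is $0$-good and for each $|S|\le k\le h$, the number of $(i-1)$-good sequences in $N(S)^k$ is at least $(1-\beta)|N(S)|^k$. These are called $i$-good relative to $(\alpha,\beta,h,r)$. *)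

theory Defs
  imports Complex_Main
begin

definition simple_graph :: "'a set \<Rightarrow> ('a \<Rightarrow> 'a \<Rightarrow> bool) \<Rightarrow> bool" where
  "simple_graph V E \<longleftrightarrow> finite V \<and> (\<forall>u v. E u v \<longrightarrow> u \<in> V \<and> v \<in> V)
     \<and> (\<forall>u v. E u v \<longrightarrow> E v u) \<and> (\<forall>v. \<not> E v v)"

definition degree :: "'a set \<Rightarrow> ('a \<Rightarrow> 'a \<Rightarrow> bool) \<Rightarrow> 'a \<Rightarrow> nat" where
  "degree V E v = card {u \<in> V. E v u}"

definition p_r :: "nat \<Rightarrow> 'a set \<Rightarrow> ('a \<Rightarrow> 'a \<Rightarrow> bool) \<Rightarrow> real" where
  "p_r r V E = (1 / real (card V)) *
     ((1 / real (card V)) * (\<Sum>v\<in>V. real (degree V E v) ^ r)) powr (1 / real r)"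

definition nbhd :: "'a set \<Rightarrow> ('a \<Rightarrow> 'a \<Rightarrow> bool) \<Rightarrow> 'a list \<Rightarrow> 'a set" where
  "nbhd V E S = {v \<in> V. \<forall>u \<in> set S. E u v}"

definition seqs :: "'a set \<Rightarrow> nat \<Rightarrow> 'a list set" where
  "seqs W k = {xs. set xs \<subseteq> W \<and> length xs = k}"

fun good :: "real \<Rightarrow> real \<Rightarrow> nat \<Rightarrow> nat \<Rightarrow> 'a set \<Rightarrow> ('a \<Rightarrow> 'a \<Rightarrow> bool)
             \<Rightarrow> nat \<Rightarrow> 'a list \<Rightarrow> bool" where
  "good \<alpha> \<beta> h r V E 0 T \<longleftrightarrow>
     real (card (nbhd V E T)) \<ge> \<alpha> * p_r r V E ^ length T * real (card V)"
| "good \<alpha> \<beta> h r V E (Suc i) S \<longleftrightarrow>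
     length S \<le> h \<and> good \<alpha> \<beta> h r V E 0 S \<and>
     (\<forall>k. length S \<le> k \<and> k \<le> h \<longrightarrow>
        real (card {T \<in> seqs (nbhd V E S) k. good \<alpha> \<beta> h r V E i T})
          \<ge> (1 - \<beta>) * real (card (nbhd V E S)) ^ k)"

end

theory Submission imports Defs "HOL-Analysis.Convex" begin

(* Let M(k,m) = n^(k+m) p^(km); this is the size of the sum of |N(U)|^m over U in V^k when every
  common neighbourhood has its typical size p^k n.  The key claim is that the sum of |N(U)|^m over
  the U that are not i-good is at most eta M(k,m) once alpha is small enough, uniformly in the
  graph.  It goes by induction on i: a 0-good sequence T that is not (i+1)-good has, for some k,
  more than beta |N(T)|^k non-i-good sequences in N(T)^k, so double counting pairs (T, U) with T
  and U completely joined bounds the contribution of such T with large |N(T)| by the level-i bad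
  sum, while T with small |N(T)| contribute little anyway.  As (i+1)-good implies i-good, the
  alpha obtained for level h serves every i <= h.
  On the other hand, double counting and the power mean inequality show that the sequences of j
  distinct vertices contribute at least n^r (n p^r - j)^j >= (3/4)^j M(j,r) in total. *)

lemma finite_seqs: "finite W \<Longrightarrow> finite (seqs W k)"
  unfolding seqs_def by (rule finite_lists_length_eq)

lemma card_seqs: "finite W \<Longrightarrow> card (seqs W k) = card W ^ k"
  unfolding seqs_def by (rule card_lists_length_eq)

lemma card_distinct_seqs_ge:
  assumes "finite W"
  shows "max 0 (real (card W) - real j) ^ j \<le> real (card {S \<in> seqs W j. distinct S})"
proof (cases "j \<le> card W")
  case True
  have "(card W - j) ^ j = (\<Prod>x\<in>{card W - j + 1 .. card W}. card W - j)"
    using True by simp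
  also have "\<dots> \<le> \<Prod>{card W - j + 1 .. card W}"
    by (rule prod_mono) auto
  also have "\<dots> = card {S \<in> seqs W j. distinct S}"
    using card_lists_distinct_length_eq[OF assms True]
    by (simp add: seqs_def conj_commute conj_left_commute)
  finally have "real (card W - j) ^ j \<le> real (card {S \<in> seqs W j. distinct S})"
    by (metis of_nat_le_iff of_nat_power)
  then show ?thesis
    using True by simp
next
  case False
  then show ?thesis by (cases j) auto
qed

lemma sum_card_filter_swap:
  assumes "finite A" "finite B"
  shows "(\<Sum>a\<in>A. card {b \<in> B. R a b}) = (\<Sum>b\<in>B. card {a \<in> A. R a b})"
proof -
  have "(\<Sum>a\<in>A. card {b \<in> B. R a b}) = (\<Sum>a\<in>A. \<Sum>b\<in>B. if R a b then 1 else 0)"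
    using assms by (simp add: sum.If_cases Int_def conj_commute)
  also have "\<dots> = (\<Sum>b\<in>B. \<Sum>a\<in>A. if R a b then 1 else 0)"
    by (rule sum.swap)
  also have "\<dots> = (\<Sum>b\<in>B. card {a \<in> A. R a b})"
    using assms by (simp add: sum.If_cases Int_def conj_commute)
  finally show ?thesis .
qed

lemma sum_Un_le:
  fixes f :: "'b \<Rightarrow> 'c::ordered_comm_monoid_add"
  assumes "finite A" "finite B" "\<And>x. 0 \<le> f x"
  shows "sum f (A \<union> B) \<le> sum f A + sum f B"
proof -
  have "sum f (A \<union> B) \<le> sum f (A \<union> B) + sum f (A \<inter> B)"
    using assms(3) by (simp add: add_increasing2 sum_nonneg)
  also have "\<dots> = sum f A + sum f B"
    using assms(1,2) by (rule sum.union_inter)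
  finally show ?thesis .
qed

lemma sum_UN_le:
  fixes f :: "'b \<Rightarrow> 'c::ordered_comm_monoid_add"
  assumes "finite K" "\<And>k. k \<in> K \<Longrightarrow> finite (B k)" "\<And>x. 0 \<le> f x"
  shows "sum f (\<Union>k\<in>K. B k) \<le> (\<Sum>k\<in>K. sum f (B k))"
  using assms(1,2)
proof (induction K rule: finite_induct)
  case (insert k K)
  have "sum f (\<Union>k\<in>insert k K. B k) \<le> sum f (B k) + sum f (\<Union>k\<in>K. B k)"
    using insert.hyps insert.prems by (auto intro: sum_Un_le assms(3))
  also have "\<dots> \<le> sum f (B k) + (\<Sum>k\<in>K. sum f (B k))"
    using insert by (auto intro: add_left_mono)
  finally show ?case
    using insert.hyps by simp
qed simp

lemma convex_on_power_nonneg: "convex_on {0::real..} (\<lambda>x. x ^ n)"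
proof (cases "even n")
  case True
  then show ?thesis
    using convex_on_subset[OF convex_power_even[OF True]] by auto
next
  case False
  then show ?thesis using convex_power_odd by simp
qed

lemma card_mult_power_mean_le:
  fixes g :: "'b \<Rightarrow> real"
  assumes "finite A" "A \<noteq> {}" "\<And>x. x \<in> A \<Longrightarrow> 0 \<le> g x"
  shows "real (card A) * ((\<Sum>x\<in>A. g x) / real (card A)) ^ n \<le> (\<Sum>x\<in>A. g x ^ n)"
proof -
  have card_pos: "real (card A) > 0"
    using assms by (simp add: card_gt_0_iff)
  have "(\<Sum>x\<in>A. (1 / real (card A)) *\<^sub>R g x) ^ n \<le> (\<Sum>x\<in>A. (1 / real (card A)) * g x ^ n)"
    by (rule convex_on_sum[OF assms(1,2) convex_on_power_nonneg]) (use assms in auto)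
  then have "((\<Sum>x\<in>A. g x) / real (card A)) ^ n \<le> (\<Sum>x\<in>A. g x ^ n) / real (card A)"
    by (simp add: sum_distrib_left[symmetric] sum_divide_distrib[symmetric])
  then show ?thesis
    using card_pos by (simp add: field_simps)
qed

lemma power_le_add_power_div:
  fixes x D :: real
  assumes "0 \<le> x" "0 < D" "m \<le> k"
  shows "x ^ m \<le> D ^ m + x ^ k / D ^ (k - m)"
proof (cases "x \<le> D")
  case True
  then have "x ^ m \<le> D ^ m"
    using assms by (simp add: power_mono)
  then show ?thesis
    using assms by (simp add: add_increasing2)
next
  case False
  have "x ^ m * D ^ (k - m) \<le> x ^ m * x ^ (k - m)"
    using False assms by (intro mult_left_mono power_mono) auto
  also have "\<dots> = x ^ k"
    using assms by (simp flip: power_add)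
  finally have "x ^ m \<le> x ^ k / D ^ (k - m)"
    using assms by (simp add: pos_le_divide_eq)
  then show ?thesis
    using assms by (simp add: add_increasing)
qed

lemma inverse_two_power_Suc_le: "1 / 2 ^ Suc j \<le> (3 / 4 :: real) ^ j"
proof -
  have "(1 / 2 :: real) ^ Suc j \<le> (1 / 2) ^ j"
    by (rule power_decreasing) auto
  also have "\<dots> \<le> (3 / 4) ^ j"
    by (rule power_mono) auto
  finally show ?thesis
    by (simp add: power_one_over)
qed

lemma power_lt_mult_power_of_root_bound:
  fixes x c p :: real
  assumes "0 < x" "0 < r" "0 \<le> c" "c * x powr (- 1 / real r) < p"
  shows "c ^ r < x * p ^ r"
proof -
  define q where "q = x powr (- 1 / real r)"
  have "q ^ r = q powr real r"
    using assms by (simp add: q_def powr_realpow)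
  also have "\<dots> = x powr (- 1 / real r * real r)"
    unfolding q_def by (rule powr_powr)
  also have "\<dots> = 1 / x"
    using assms by simp
  finally have root_power: "q ^ r = 1 / x" .
  have "(c * q) ^ r < p ^ r"
    using assms by (intro power_strict_mono) (auto simp: q_def)
  then have "c ^ r / x < p ^ r"
    by (simp add: power_mult_distrib root_power)
  then show ?thesis
    using assms by (simp add: divide_less_eq mult.commute)
qed

lemma sum_degree_power_eq_p_r:
  assumes "0 < card V" "0 < r"
  shows "(\<Sum>v\<in>V. real (degree V E v) ^ r) = real (card V) ^ (r + 1) * p_r r V E ^ r"
proof -
  define N where "N = real (card V)"
  define X where "X = (\<Sum>v\<in>V. real (degree V E v) ^ r)"
  have N_pos: "N > 0" and X_nonneg: "X \<ge> 0"
    using assms by (auto simp: N_def X_def sum_nonneg)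
  have "((X / N) powr (1 / real r)) ^ r = X / N"
  proof (cases "X = 0")
    case False
    then have "X / N > 0" using N_pos X_nonneg by simp
    then have "((X / N) powr (1 / real r)) ^ r = ((X / N) powr (1 / real r)) powr real r"
      by (subst powr_realpow) auto
    also have "\<dots> = X / N"
      using N_pos X_nonneg assms by (simp add: powr_powr)
    finally show ?thesis .
  next
    case True
    then show ?thesis using assms by simp
  qed
  moreover have "p_r r V E = (X / N) powr (1 / real r) / N"
    unfolding p_r_def X_def N_def by simp
  ultimately have "X / N = (N * p_r r V E) ^ r"
    using N_pos by simp
  then have "X = N ^ (r + 1) * p_r r V E ^ r"
    using N_pos by (simp add: field_simps)
  then show ?thesis unfolding X_def N_def .
qed

lemma seqs_nbhd_eq: "seqs (nbhd V E T) k = {U \<in> seqs V k. \<forall>t\<in>set T. \<forall>u\<in>set U. E t u}"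
  unfolding seqs_def nbhd_def by auto

definition bad_sum :: "real \<Rightarrow> real \<Rightarrow> nat \<Rightarrow> nat \<Rightarrow> 'a set \<Rightarrow> ('a \<Rightarrow> 'a \<Rightarrow> bool)
    \<Rightarrow> nat \<Rightarrow> nat \<Rightarrow> nat \<Rightarrow> real" where
  "bad_sum \<alpha> \<beta> h r V E i k m =
     (\<Sum>U \<in> {U \<in> seqs V k. \<not> good \<alpha> \<beta> h r V E i U}. real (card (nbhd V E U)) ^ m)"

definition deficient :: "real \<Rightarrow> real \<Rightarrow> nat \<Rightarrow> nat \<Rightarrow> 'a set \<Rightarrow> ('a \<Rightarrow> 'a \<Rightarrow> bool)
    \<Rightarrow> nat \<Rightarrow> nat \<Rightarrow> 'a list \<Rightarrow> bool" where
  "deficient \<alpha> \<beta> h r V E i k T \<longleftrightarrow>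
     real (card {U \<in> seqs (nbhd V E T) k. good \<alpha> \<beta> h r V E i U})
       < (1 - \<beta>) * real (card (nbhd V E T)) ^ k"

lemma not_good_SucD:
  assumes "\<not> good \<alpha> \<beta> h r V E (Suc i) T" "length T \<le> h"
  shows "\<not> good \<alpha> \<beta> h r V E 0 T \<or> (\<exists>k\<in>{length T..h}. deficient \<alpha> \<beta> h r V E i k T)"
  using assms by (auto simp: deficient_def not_le)

locale fin_simple_graph =
  fixes V :: "'a set" and E :: "'a \<Rightarrow> 'a \<Rightarrow> bool"
  assumes simple_graph: "simple_graph V E"
begin

lemma finite_vertices: "finite V"
  using simple_graph by (simp add: simple_graph_def)

lemma finite_nbhd: "finite (nbhd V E S)"
  using finite_vertices by (rule rev_finite_subset) (auto simp: nbhd_def)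

lemma card_seqs_nbhd: "card (seqs (nbhd V E S) k) = card (nbhd V E S) ^ k"
  using finite_nbhd by (rule card_seqs)

lemma seqs_nbhd_eq_sym: "seqs (nbhd V E U) k = {T \<in> seqs V k. \<forall>t\<in>set T. \<forall>u\<in>set U. E t u}"
  using simple_graph unfolding seqs_def nbhd_def simple_graph_def by blast

lemma sum_card_seqs_nbhd_swap:
  "(\<Sum>T\<in>seqs V a. card {U \<in> seqs (nbhd V E T) b. P U})
     = (\<Sum>U \<in> {U \<in> seqs V b. P U}. card (nbhd V E U) ^ a)"
proof -
  let ?joined = "\<lambda>T U. \<forall>t\<in>set T. \<forall>u\<in>set U. E t u"
  have "(\<Sum>T\<in>seqs V a. card {U \<in> seqs (nbhd V E T) b. P U})
      = (\<Sum>T\<in>seqs V a. card {U \<in> {U \<in> seqs V b. P U}. ?joined T U})"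
    by (simp add: seqs_nbhd_eq conj_commute conj_left_commute)
  also have "\<dots> = (\<Sum>U \<in> {U \<in> seqs V b. P U}. card {T \<in> seqs V a. ?joined T U})"
    by (rule sum_card_filter_swap) (simp_all add: finite_seqs finite_vertices)
  also have "\<dots> = (\<Sum>U \<in> {U \<in> seqs V b. P U}. card (nbhd V E U) ^ a)"
    by (simp add: card_seqs_nbhd flip: seqs_nbhd_eq_sym)
  finally show ?thesis .
qed

lemma sum_card_nbhd_eq_sum_degree_power:
  "(\<Sum>T\<in>seqs V r. card (nbhd V E T)) = (\<Sum>v\<in>V. degree V E v ^ r)"
proof -
  have "(\<Sum>T\<in>seqs V r. card (nbhd V E T)) = (\<Sum>T\<in>seqs V r. card {v \<in> V. \<forall>u\<in>set T. E u v})"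
    unfolding nbhd_def ..
  also have "\<dots> = (\<Sum>v\<in>V. card {T \<in> seqs V r. \<forall>u\<in>set T. E u v})"
    by (rule sum_card_filter_swap) (simp_all add: finite_seqs finite_vertices)
  also have "\<dots> = (\<Sum>v\<in>V. card (seqs {u \<in> V. E v u} r))"
  proof (rule sum.cong)
    have "{T \<in> seqs V r. \<forall>u\<in>set T. E u v} = seqs {u \<in> V. E v u} r" for v
      using simple_graph unfolding seqs_def simple_graph_def by blast
    then show "card {T \<in> seqs V r. \<forall>u\<in>set T. E u v} = card (seqs {u \<in> V. E v u} r)" for v
      by simp
  qed simp_all
  also have "\<dots> = (\<Sum>v\<in>V. degree V E v ^ r)"
    by (simp add: card_seqs finite_vertices degree_def)
  finally show ?thesis .
qed

lemma good_Suc_imp_good: "good \<alpha> \<beta> h r V E (Suc i) S \<Longrightarrow> good \<alpha> \<beta> h r V E i S"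
proof (induction i arbitrary: S)
  case (Suc i)
  have "real (card {T \<in> seqs (nbhd V E S) k. good \<alpha> \<beta> h r V E (Suc i) T})
      \<le> real (card {T \<in> seqs (nbhd V E S) k. good \<alpha> \<beta> h r V E i T})" for k
    using Suc.IH by (intro of_nat_mono card_mono) (auto simp: finite_seqs finite_nbhd simp del: good.simps)
  with Suc.prems show ?case
    by (simp only: good.simps(2)) (blast intro: order.trans)
qed simp

lemma bad_sum_mono:
  assumes "i \<le> i'"
  shows "bad_sum \<alpha> \<beta> h r V E i k m \<le> bad_sum \<alpha> \<beta> h r V E i' k m"
proof -
  have "good \<alpha> \<beta> h r V E i' U \<le> good \<alpha> \<beta> h r V E i U" for U
    by (rule lift_Suc_antimono_le[of "\<lambda>i. good \<alpha> \<beta> h r V E i U", OF _ assms])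
      (blast intro: le_boolI good_Suc_imp_good)
  then show ?thesis
    unfolding bad_sum_def
    by (intro sum_mono2) (auto simp: finite_seqs finite_vertices simp del: good.simps)
qed

lemma bad_sum_zero_le:
  assumes "0 \<le> \<alpha>" "\<alpha> \<le> 1" "1 \<le> m"
  shows "bad_sum \<alpha> \<beta> h r V E 0 k m
    \<le> \<alpha> * real (card V) ^ (k + m) * p_r r V E ^ (k * m)"
proof -
  let ?p = "p_r r V E" and ?n = "real (card V)"
  let ?bad = "{U \<in> seqs V k. \<not> good \<alpha> \<beta> h r V E 0 U}"
  have p_nonneg: "0 \<le> ?p"
    unfolding p_r_def by simp
  have "bad_sum \<alpha> \<beta> h r V E 0 k m \<le> real (card ?bad) * (\<alpha> * ?p ^ k * ?n) ^ m"
    unfolding bad_sum_def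
    by (rule sum_bounded_above) (auto simp: seqs_def intro: power_mono)
  also have "\<dots> \<le> ?n ^ k * (\<alpha> * ?p ^ k * ?n) ^ m"
  proof (rule mult_right_mono)
    have "card ?bad \<le> card (seqs V k)"
      by (rule card_mono) (auto simp: finite_seqs finite_vertices)
    then show "real (card ?bad) \<le> ?n ^ k"
      by (simp add: card_seqs finite_vertices flip: of_nat_power)
  qed (use assms p_nonneg in simp)
  also have "\<dots> = \<alpha> ^ m * ?n ^ (k + m) * ?p ^ (k * m)"
    by (simp add: power_mult_distrib power_add power_mult)
  also have "\<dots> \<le> \<alpha> * ?n ^ (k + m) * ?p ^ (k * m)"
    using assms p_nonneg power_decreasing[of 1 m \<alpha>] by (intro mult_right_mono) auto
  finally show ?thesis .
qed

(* Each deficient T has more than beta |N(T)|^k non-i-good sequences U in N(T)^k; counting the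
  pairs (T, U) from the side of U gives the bad sum. *)
lemma sum_deficient_power_le_bad_sum:
  "\<beta> * (\<Sum>T \<in> {T \<in> seqs V j. deficient \<alpha> \<beta> h r V E i k T}. real (card (nbhd V E T)) ^ k)
     \<le> bad_sum \<alpha> \<beta> h r V E i k j"
proof -
  let ?bad_in = "\<lambda>T. real (card {U \<in> seqs (nbhd V E T) k. \<not> good \<alpha> \<beta> h r V E i U})"
  have "\<beta> * real (card (nbhd V E T)) ^ k \<le> ?bad_in T" if "deficient \<alpha> \<beta> h r V E i k T" for T
  proof -
    have "card {U \<in> seqs (nbhd V E T) k. good \<alpha> \<beta> h r V E i U}
        + card {U \<in> seqs (nbhd V E T) k. \<not> good \<alpha> \<beta> h r V E i U} = card (nbhd V E T) ^ k"
      using card_Int_Diff[OF finite_seqs[OF finite_nbhd], of T k "{U. good \<alpha> \<beta> h r V E i U}"]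
      by (simp add: card_seqs_nbhd Int_def set_diff_eq)
    then show ?thesis
      using that unfolding deficient_def by (simp add: algebra_simps flip: of_nat_add of_nat_power)
  qed
  then have "\<beta> * (\<Sum>T \<in> {T \<in> seqs V j. deficient \<alpha> \<beta> h r V E i k T}. real (card (nbhd V E T)) ^ k)
      \<le> (\<Sum>T \<in> {T \<in> seqs V j. deficient \<alpha> \<beta> h r V E i k T}. ?bad_in T)"
    unfolding sum_distrib_left by (intro sum_mono) auto
  also have "\<dots> \<le> (\<Sum>T \<in> seqs V j. ?bad_in T)"
    by (rule sum_mono2) (auto simp: finite_seqs finite_vertices)
  also have "\<dots> = bad_sum \<alpha> \<beta> h r V E i k j"
    unfolding bad_sum_def using arg_cong[where f = real, OF sum_card_seqs_nbhd_swap]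
    by simp
  finally show ?thesis .
qed

end

locale graph_density = fin_simple_graph +
  fixes r :: nat
  assumes density_pos: "0 < p_r r V E"
begin

lemma card_vertices_pos: "0 < card V"
  using density_pos by (rule contrapos_pp) (simp add: p_r_def)

lemma sum_card_nbhd_eq:
  assumes "0 < r"
  shows "(\<Sum>T\<in>seqs V r. real (card (nbhd V E T))) = real (card V) ^ (r + 1) * p_r r V E ^ r"
  using arg_cong[where f = real, OF sum_card_nbhd_eq_sum_degree_power]
    sum_degree_power_eq_p_r[OF card_vertices_pos assms, of E]
  by simp

(* Split the deficient T according to whether |N(T)| exceeds D = delta p^j n. *)
lemma sum_deficient_power_le:
  assumes "0 < \<delta>" "\<delta> \<le> 1" "0 < \<beta>" "0 \<le> \<epsilon>" "1 \<le> m" "m \<le> j" "j \<le> k" "k \<le> h"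
    and bad: "bad_sum \<alpha> \<beta> h r V E i k j \<le> \<epsilon> * real (card V) ^ (k + j) * p_r r V E ^ (k * j)"
  shows "(\<Sum>T \<in> {T \<in> seqs V j. deficient \<alpha> \<beta> h r V E i k T}. real (card (nbhd V E T)) ^ m)
    \<le> (\<delta> + \<epsilon> / (\<beta> * \<delta> ^ h)) * real (card V) ^ (j + m) * p_r r V E ^ (j * m)"
proof -
  let ?p = "p_r r V E" and ?n = "real (card V)" and ?f = "\<lambda>T. real (card (nbhd V E T))"
  define B where "B = {T \<in> seqs V j. deficient \<alpha> \<beta> h r V E i k T}"
  define D where "D = \<delta> * ?p ^ j * ?n"
  define M where "M = ?n ^ (j + m) * ?p ^ (j * m)"
  have D_pos: "0 < D" and M_nonneg: "0 \<le> M"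
    using assms density_pos card_vertices_pos by (simp_all add: D_def M_def)
  have card_B: "real (card B) \<le> ?n ^ j"
  proof -
    have "card B \<le> card (seqs V j)"
      unfolding B_def by (rule card_mono) (auto simp: finite_seqs finite_vertices)
    then show ?thesis by (simp add: card_seqs finite_vertices flip: of_nat_power)
  qed
  have sum_B_k: "(\<Sum>T\<in>B. ?f T ^ k) \<le> \<epsilon> * ?n ^ (k + j) * ?p ^ (k * j) / \<beta>"
    using order.trans[OF sum_deficient_power_le_bad_sum bad] assms(3)
    by (simp add: B_def pos_le_divide_eq mult.commute)
  have D_power: "D ^ (k - m) = \<delta> ^ (k - m) * (?p ^ j * ?n) ^ (k - m)"
    by (simp add: D_def power_mult_distrib mult.assoc)
  have scale: "?n ^ (k + j) * ?p ^ (k * j) = M * (?p ^ j * ?n) ^ (k - m)"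
  proof -
    have "k + j = (j + m) + (k - m)" and "k * j = j * m + j * (k - m)"
      using assms by (simp_all add: algebra_simps diff_mult_distrib2)
    then show ?thesis
      unfolding M_def by (simp only: power_add power_mult power_mult_distrib) (simp add: ac_simps)
  qed
  have "(\<Sum>T\<in>B. ?f T ^ m) \<le> (\<Sum>T\<in>B. D ^ m + ?f T ^ k / D ^ (k - m))"
    using D_pos assms by (intro sum_mono power_le_add_power_div) auto
  also have "\<dots> = real (card B) * D ^ m + (\<Sum>T\<in>B. ?f T ^ k) / D ^ (k - m)"
    by (simp add: sum.distrib sum_divide_distrib)
  also have "\<dots> \<le> ?n ^ j * D ^ m + (\<epsilon> * ?n ^ (k + j) * ?p ^ (k * j) / \<beta>) / D ^ (k - m)"
    using card_B sum_B_k D_pos by (intro add_mono mult_right_mono divide_right_mono) auto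
  also have "\<dots> = \<delta> ^ m * M + \<epsilon> / (\<beta> * \<delta> ^ (k - m)) * M"
  proof -
    have "?n ^ j * D ^ m = \<delta> ^ m * M"
      by (simp add: D_def M_def power_mult_distrib power_add power_mult ac_simps)
    moreover have "(\<epsilon> * (M * (?p ^ j * ?n) ^ (k - m)) / \<beta>) / (\<delta> ^ (k - m) * (?p ^ j * ?n) ^ (k - m))
        = \<epsilon> / (\<beta> * \<delta> ^ (k - m)) * M"
      using density_pos card_vertices_pos assms by (simp add: field_simps)
    ultimately show ?thesis
      by (simp only: mult.assoc scale D_power)
  qed
  also have "\<dots> \<le> \<delta> * M + \<epsilon> / (\<beta> * \<delta> ^ h) * M"
  proof (intro add_mono mult_right_mono M_nonneg)
    show "\<delta> ^ m \<le> \<delta>"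
      using assms power_decreasing[of 1 m \<delta>] by simp
    have "\<delta> ^ h \<le> \<delta> ^ (k - m)"
      using assms by (intro power_decreasing) auto
    then show "\<epsilon> / (\<beta> * \<delta> ^ (k - m)) \<le> \<epsilon> / (\<beta> * \<delta> ^ h)"
      using assms by (intro divide_left_mono mult_left_mono mult_pos_pos) auto
  qed
  finally show ?thesis
    by (simp add: B_def M_def distrib_right mult.assoc)
qed

lemma bad_sum_Suc_le:
  assumes "0 < \<alpha>" "\<alpha> \<le> 1" "0 < \<delta>" "\<delta> \<le> 1" "0 < \<beta>" "0 \<le> \<epsilon>" "1 \<le> m" "m \<le> j" "j \<le> h"
    and bad: "\<And>k. j \<le> k \<Longrightarrow> k \<le> h \<Longrightarrow>
      bad_sum \<alpha> \<beta> h r V E i k j \<le> \<epsilon> * real (card V) ^ (k + j) * p_r r V E ^ (k * j)"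
  shows "bad_sum \<alpha> \<beta> h r V E (Suc i) j m
    \<le> (\<alpha> + real h * (\<delta> + \<epsilon> / (\<beta> * \<delta> ^ h))) * real (card V) ^ (j + m) * p_r r V E ^ (j * m)"
proof -
  let ?f = "\<lambda>T. real (card (nbhd V E T)) ^ m"
  define M where "M = real (card V) ^ (j + m) * p_r r V E ^ (j * m)"
  define C where "C = \<delta> + \<epsilon> / (\<beta> * \<delta> ^ h)"
  define B0 where "B0 = {T \<in> seqs V j. \<not> good \<alpha> \<beta> h r V E 0 T}"
  define D where "D k = {T \<in> seqs V j. deficient \<alpha> \<beta> h r V E i k T}" for k
  have finite_D: "finite (D k)" for k
    by (simp add: D_def finite_seqs finite_vertices)
  have "T \<in> B0 \<union> (\<Union>k\<in>{j..h}. D k)"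
    if "T \<in> seqs V j" "\<not> good \<alpha> \<beta> h r V E (Suc i) T" for T
  proof -
    have "length T = j"
      using that(1) by (simp add: seqs_def)
    then show ?thesis
      using not_good_SucD[OF that(2)] assms(9) that(1) by (auto simp: B0_def D_def)
  qed
  then have cover: "{T \<in> seqs V j. \<not> good \<alpha> \<beta> h r V E (Suc i) T} \<subseteq> B0 \<union> (\<Union>k\<in>{j..h}. D k)"
    by blast
  have "bad_sum \<alpha> \<beta> h r V E (Suc i) j m \<le> sum ?f (B0 \<union> (\<Union>k\<in>{j..h}. D k))"
    unfolding bad_sum_def
    by (rule sum_mono2[OF _ cover]) (auto simp: B0_def finite_seqs finite_vertices finite_D)
  also have "\<dots> \<le> sum ?f B0 + (\<Sum>k\<in>{j..h}. sum ?f (D k))"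
    using finite_D
    by (intro order.trans[OF sum_Un_le] add_left_mono sum_UN_le)
      (auto simp: B0_def finite_seqs finite_vertices)
  also have "\<dots> \<le> \<alpha> * M + (\<Sum>k\<in>{j..h}. C * M)"
  proof (intro add_mono sum_mono)
    show "sum ?f B0 \<le> \<alpha> * M"
      using bad_sum_zero_le[where k = j] assms(1,2,7)
      by (simp add: B0_def M_def bad_sum_def mult.assoc)
    fix k assume "k \<in> {j..h}"
    then have k: "j \<le> k" "k \<le> h" by auto
    show "sum ?f (D k) \<le> C * M"
      using sum_deficient_power_le[OF assms(3-8) k bad[OF k]]
      by (simp add: C_def D_def M_def mult.assoc)
  qed
  also have "\<dots> \<le> (\<alpha> + real h * C) * M"
  proof -
    have "real (card {j..h}) * (C * M) \<le> real h * (C * M)"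
      using assms(3-8) density_pos by (intro mult_right_mono) (simp_all add: C_def M_def)
    then show ?thesis
      by (simp add: algebra_simps)
  qed
  finally show ?thesis
    by (simp add: C_def M_def mult.assoc)
qed

lemma sum_distinct_seqs_nbhd_power_ge:
  assumes "0 < r" "real j \<le> real (card V) * p_r r V E ^ r"
  shows "real (card V) ^ r * (real (card V) * p_r r V E ^ r - real j) ^ j
    \<le> (\<Sum>S \<in> {S \<in> seqs V j. distinct S}. real (card (nbhd V E S)) ^ r)"
proof -
  let ?n = "real (card V)" and ?p = "p_r r V E"
  define g where "g T = max 0 (real (card (nbhd V E T)) - real j)" for T
  have card_seqs_r: "real (card (seqs V r)) = ?n ^ r"
    by (simp add: card_seqs finite_vertices)
  have n_pos: "0 < ?n"
    using card_vertices_pos by simp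
  have "seqs V r \<noteq> {}"
    using card_seqs_r n_pos by force
  have "(\<Sum>T\<in>seqs V r. real (card (nbhd V E T)) - real j) \<le> (\<Sum>T\<in>seqs V r. g T)"
    unfolding g_def by (intro sum_mono) simp
  then have "?n ^ (r + 1) * ?p ^ r - ?n ^ r * real j \<le> (\<Sum>T\<in>seqs V r. g T)"
    by (simp add: sum_subtractf sum_card_nbhd_eq assms card_seqs_r)
  then have mean: "?n * ?p ^ r - real j \<le> (\<Sum>T\<in>seqs V r. g T) / ?n ^ r"
    using n_pos by (simp add: field_simps)
  have "?n ^ r * (?n * ?p ^ r - real j) ^ j \<le> ?n ^ r * ((\<Sum>T\<in>seqs V r. g T) / ?n ^ r) ^ j"
    using mean assms n_pos by (intro mult_left_mono power_mono) auto
  also have "\<dots> \<le> (\<Sum>T\<in>seqs V r. g T ^ j)"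
    using card_mult_power_mean_le[of "seqs V r" g j] \<open>seqs V r \<noteq> {}\<close>
    by (simp add: g_def card_seqs_r finite_seqs finite_vertices)
  also have "\<dots> \<le> (\<Sum>T\<in>seqs V r. real (card {S \<in> seqs (nbhd V E T) j. distinct S}))"
    unfolding g_def by (intro sum_mono card_distinct_seqs_ge finite_nbhd)
  also have "\<dots> = (\<Sum>S \<in> {S \<in> seqs V j. distinct S}. real (card (nbhd V E S)) ^ r)"
    using arg_cong[where f = real, OF sum_card_seqs_nbhd_swap] by simp
  finally show ?thesis .
qed

lemma sum_good_distinct_seqs_ge:
  assumes "0 < r" "4 * real j \<le> real (card V) * p_r r V E ^ r"
    and bad: "bad_sum \<alpha> \<beta> h r V E i j r \<le> \<beta> * real (card V) ^ (j + r) * p_r r V E ^ (j * r)"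
  shows "((3 / 4) ^ j - \<beta>) * real (card V) ^ (j + r) * p_r r V E ^ (j * r)
    \<le> (\<Sum>S \<in> {S \<in> seqs V j. distinct S \<and> good \<alpha> \<beta> h r V E i S}. real (card (nbhd V E S)) ^ r)"
proof -
  let ?n = "real (card V)" and ?p = "p_r r V E" and ?f = "\<lambda>S. real (card (nbhd V E S)) ^ r"
  define A where "A = {S \<in> seqs V j. distinct S}"
  have "?p ^ (j * r) = (?p ^ r) ^ j"
    by (metis mult.commute power_mult)
  then have "(3 / 4) ^ j * (?n ^ (j + r) * ?p ^ (j * r)) = ?n ^ r * (3 / 4 * (?n * ?p ^ r)) ^ j"
    by (simp only: power_mult_distrib power_add mult_ac)
  also have "\<dots> \<le> ?n ^ r * (?n * ?p ^ r - real j) ^ j"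
    using assms density_pos by (intro mult_left_mono power_mono) auto
  also have "\<dots> \<le> sum ?f A"
    unfolding A_def using assms by (intro sum_distinct_seqs_nbhd_power_ge) auto
  also have "\<dots> = sum ?f {S \<in> A. good \<alpha> \<beta> h r V E i S} + sum ?f {S \<in> A. \<not> good \<alpha> \<beta> h r V E i S}"
    using sum.Int_Diff[of A ?f "{S. good \<alpha> \<beta> h r V E i S}"]
    by (simp add: A_def finite_seqs finite_vertices Int_def set_diff_eq)
  also have "\<dots> \<le> sum ?f {S \<in> A. good \<alpha> \<beta> h r V E i S} + bad_sum \<alpha> \<beta> h r V E i j r"
    unfolding bad_sum_def A_def
    by (intro add_left_mono sum_mono2) (auto simp: finite_seqs finite_vertices)
  finally show ?thesis
    using bad by (simp add: A_def left_diff_distrib mult.assoc)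
qed

end

lemma graph_density_if_p_r_gt:
  assumes "simple_graph V E" "0 < r" "1 \<le> c" "c * real (card V) powr (- 1 / real r) < p_r r V E"
  shows "graph_density V E r" and "c \<le> real (card V) * p_r r V E ^ r"
proof -
  have "0 \<le> c * real (card V) powr (- 1 / real r)"
    using assms(3) by simp
  with assms(4) have "0 < p_r r V E"
    by linarith
  with assms(1) show "graph_density V E r"
    by (simp add: graph_density_def graph_density_axioms_def fin_simple_graph_def)
  then interpret graph_density V E r .
  have "c \<le> c ^ r"
    using assms by (intro self_le_power) auto
  also have "\<dots> < real (card V) * p_r r V E ^ r"
    using assms card_vertices_pos by (intro power_lt_mult_power_of_root_bound) auto
  finally show "c \<le> real (card V) * p_r r V E ^ r"
    by simp
qed

lemma bad_sum_small:
  assumes "0 < \<beta>" "0 < \<eta>"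
  shows "\<exists>a>0. \<forall>\<alpha> (V :: 'a set) E k m.
    0 < \<alpha> \<and> \<alpha> \<le> a \<and> graph_density V E r \<and> 1 \<le> m \<and> m \<le> k \<and> k \<le> h \<longrightarrow>
      bad_sum \<alpha> \<beta> h r V E i k m \<le> \<eta> * real (card V) ^ (k + m) * p_r r V E ^ (k * m)"
  using assms(2)
proof (induction i arbitrary: \<eta>)
  case 0
  show ?case
  proof (intro exI[of _ "min \<eta> 1"] conjI allI impI)
    fix \<alpha> :: real and V :: "'a set" and E k m
    assume H: "0 < \<alpha> \<and> \<alpha> \<le> min \<eta> 1 \<and> graph_density V E r \<and> 1 \<le> m \<and> m \<le> k \<and> k \<le> h"
    then interpret graph_density V E r by simp
    have "bad_sum \<alpha> \<beta> h r V E 0 k m \<le> \<alpha> * real (card V) ^ (k + m) * p_r r V E ^ (k * m)"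
      using H by (intro bad_sum_zero_le) auto
    also have "\<dots> \<le> \<eta> * real (card V) ^ (k + m) * p_r r V E ^ (k * m)"
      using H density_pos by (intro mult_right_mono) auto
    finally show "bad_sum \<alpha> \<beta> h r V E 0 k m \<le> \<eta> * real (card V) ^ (k + m) * p_r r V E ^ (k * m)" .
  qed (use 0 in simp)
next
  case (Suc i)
  \<comment> \<open>chosen so that \<open>h \<delta>\<close> and \<open>h \<epsilon> / (\<beta> \<delta>^h)\<close> are at most \<open>\<eta> / 3\<close>, as is \<open>\<alpha>\<close> below\<close>
  define \<delta> where "\<delta> = min 1 (\<eta> / (3 * (real h + 1)))"
  define \<epsilon> where "\<epsilon> = \<eta> * \<beta> * \<delta> ^ h / (3 * (real h + 1))"
  have \<delta>: "0 < \<delta>" "\<delta> \<le> 1" and \<epsilon>: "0 < \<epsilon>"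
    using Suc.prems assms by (simp_all add: \<delta>_def \<epsilon>_def)
  obtain a where a: "0 < a" and bad_i: "\<forall>\<alpha> (V :: 'a set) E k m.
    0 < \<alpha> \<and> \<alpha> \<le> a \<and> graph_density V E r \<and> 1 \<le> m \<and> m \<le> k \<and> k \<le> h \<longrightarrow>
      bad_sum \<alpha> \<beta> h r V E i k m \<le> \<epsilon> * real (card V) ^ (k + m) * p_r r V E ^ (k * m)"
    using Suc.IH[OF \<epsilon>] by blast
  have coefficient: "\<alpha> + real h * (\<delta> + \<epsilon> / (\<beta> * \<delta> ^ h)) \<le> \<eta>" if "\<alpha> \<le> \<eta> / 3" for \<alpha>
  proof -
    have "\<delta> \<le> \<eta> / (3 * (real h + 1))"
      by (simp add: \<delta>_def)
    moreover have "\<epsilon> / (\<beta> * \<delta> ^ h) = \<eta> / (3 * (real h + 1))"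
      using \<delta> assms by (simp add: \<epsilon>_def)
    ultimately have "\<delta> + \<epsilon> / (\<beta> * \<delta> ^ h) \<le> 2 * (\<eta> / (3 * (real h + 1)))"
      by linarith
    then have "real h * (\<delta> + \<epsilon> / (\<beta> * \<delta> ^ h)) \<le> real h * (2 * (\<eta> / (3 * (real h + 1))))"
      by (rule mult_left_mono) simp
    also have "\<dots> \<le> 2 * \<eta> / 3"
      using Suc.prems by (simp add: field_simps)
    finally show ?thesis
      using that by linarith
  qed
  show ?case
  proof (intro exI[of _ "min (min a 1) (\<eta> / 3)"] conjI allI impI)
    fix \<alpha> :: real and V :: "'a set" and E k m
    assume H: "0 < \<alpha> \<and> \<alpha> \<le> min (min a 1) (\<eta> / 3) \<and> graph_density V E r \<and> 1 \<le> m \<and> m \<le> k \<and> k \<le> h"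
    then interpret graph_density V E r by simp
    have bad: "bad_sum \<alpha> \<beta> h r V E i k' k \<le> \<epsilon> * real (card V) ^ (k' + k) * p_r r V E ^ (k' * k)"
      if "k \<le> k'" "k' \<le> h" for k'
    proof -
      have "0 < \<alpha> \<and> \<alpha> \<le> a \<and> graph_density V E r \<and> 1 \<le> k \<and> k \<le> k' \<and> k' \<le> h"
        using H that by auto
      then show ?thesis by (rule bad_i[rule_format])
    qed
    have "bad_sum \<alpha> \<beta> h r V E (Suc i) k m
        \<le> (\<alpha> + real h * (\<delta> + \<epsilon> / (\<beta> * \<delta> ^ h))) * real (card V) ^ (k + m) * p_r r V E ^ (k * m)"
      using H assms \<epsilon> by (intro bad_sum_Suc_le[OF _ _ \<delta> _ _ _ _ _ bad]) simp_all
    also have "\<dots> \<le> \<eta> * real (card V) ^ (k + m) * p_r r V E ^ (k * m)"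
      using H coefficient density_pos by (intro mult_right_mono) auto
    finally show "bad_sum \<alpha> \<beta> h r V E (Suc i) k m \<le> \<eta> * real (card V) ^ (k + m) * p_r r V E ^ (k * m)" .
  qed (use a Suc.prems in simp_all)
qed

theorem lemma3p6:
  fixes h r :: nat and \<beta> :: real
  assumes "0 < r" and "r \<le> h" and "0 < \<beta>" and "\<beta> < 1"
  shows "\<exists>\<alpha>::real. 0 < \<alpha> \<and> \<alpha> < 1 \<and>
    (\<forall>(V :: 'a set) E. simple_graph V E \<longrightarrow>
      (\<forall>i j. 1 \<le> i \<and> i \<le> h \<and> r \<le> j \<and> j \<le> h \<and>
         p_r r V E > 4 * real j * real (card V) powr (- 1 / real r) \<longrightarrow>
         (\<Sum>S \<in> {S \<in> seqs V j. distinct S \<and> good \<alpha> \<beta> h r V E i S}.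
             real (card (nbhd V E S)) ^ r)
           \<ge> (1 / 2 ^ (j + 1) - \<beta>) * real (card V) ^ (j + r) * p_r r V E ^ (j * r)))"
proof -
  obtain a where a: "0 < a" and bad_h: "\<forall>\<alpha> (V :: 'a set) E k m.
    0 < \<alpha> \<and> \<alpha> \<le> a \<and> graph_density V E r \<and> 1 \<le> m \<and> m \<le> k \<and> k \<le> h \<longrightarrow>
      bad_sum \<alpha> \<beta> h r V E h k m \<le> \<beta> * real (card V) ^ (k + m) * p_r r V E ^ (k * m)"
    using bad_sum_small[OF assms(3) assms(3), where i = h] by blast
  define \<alpha> where "\<alpha> = min a (1 / 2)"
  show ?thesis
  proof (intro exI[of _ \<alpha>] conjI allI impI)
    fix V :: "'a set" and E i j
    assume G: "simple_graph V E" and H: "1 \<le> i \<and> i \<le> h \<and> r \<le> j \<and> j \<le> h \<and>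
      p_r r V E > 4 * real j * real (card V) powr (- 1 / real r)"
    then have "1 \<le> 4 * real j"
      using assms(1) by simp
    then have density: "graph_density V E r" and dense: "4 * real j \<le> real (card V) * p_r r V E ^ r"
      using graph_density_if_p_r_gt[OF G assms(1)] H by auto
    interpret graph_density V E r
      by (fact density)
    have "bad_sum \<alpha> \<beta> h r V E i j r \<le> bad_sum \<alpha> \<beta> h r V E h j r"
      using H by (intro bad_sum_mono) simp
    also have "\<dots> \<le> \<beta> * real (card V) ^ (j + r) * p_r r V E ^ (j * r)"
      using bad_h a H assms density by (simp add: \<alpha>_def)
    finally have "((3 / 4) ^ j - \<beta>) * real (card V) ^ (j + r) * p_r r V E ^ (j * r)
      \<le> (\<Sum>S \<in> {S \<in> seqs V j. distinct S \<and> good \<alpha> \<beta> h r V E i S}. real (card (nbhd V E S)) ^ r)"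
      using sum_good_distinct_seqs_ge[OF assms(1) dense] by blast
    moreover have "(1 / 2 ^ (j + 1) - \<beta>) * real (card V) ^ (j + r) * p_r r V E ^ (j * r)
      \<le> ((3 / 4) ^ j - \<beta>) * real (card V) ^ (j + r) * p_r r V E ^ (j * r)"
      using inverse_two_power_Suc_le[of j] density_pos by (intro mult_right_mono) auto
    ultimately show "(\<Sum>S \<in> {S \<in> seqs V j. distinct S \<and> good \<alpha> \<beta> h r V E i S}.
        real (card (nbhd V E S)) ^ r) \<ge> (1 / 2 ^ (j + 1) - \<beta>) * real (card V) ^ (j + r) * p_r r V E ^ (j * r)"
      by linarith
  qed (use a in \<open>simp_all add: \<alpha>_def\<close>)
qed

end
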